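(* Let $a_1,\dots,a_n>0$ and let $\tilde{x}\in\mathbb{R}^n$ satisfy $\sum_{j=1}^n a_j\tilde{x}_j\neq0$. Then $\pi_{\mathrm{PoS}}(\tilde{x})$ is the unique optimal solution of $$\min_{v\in\Delta_n}\ \big\|v-P^F(\tilde{x})\big\|_{\rightleftharpoons}.$$
   Context: $\Delta_n=\{v\in\mathbb{R}^n: v\ge0,\ \sum_i v_i=1\}$ is the probability simplex. For $y\in\mathbb{R}^n$ with $\sum_j a_jy_j\ne0$, the allocation formula is $P^F(y)_i=\frac{a_iy_i}{\sum_{j=1}^n a_jy_j}$, $i\in[n]$. For $v\in\mathbb{R}^n$, $\|v\|_{\rightleftharpoons}=\max_i v_i-\min_i v_i$. The projection-onto-simplex mechanism is $\pi_{\mathrm{PoS}}(\tilde{x})=\arg\min_{v\in\Delta_n}\|v-P^F(\tilde{x})\|_2$ (Euclidean projection of $P^F(\tilde{x})$ onto $\Delta_n$). *)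

theory Defs
  imports "HOL-Analysis.Analysis"
begin

definition prob_simplex :: "(real ^ 'n) set" where
  "prob_simplex = {v. (\<forall>i. 0 \<le> v $ i) \<and> (\<Sum>i\<in>UNIV. v $ i) = 1}"

definition PF :: "real ^ 'n \<Rightarrow> real ^ 'n \<Rightarrow> real ^ 'n" where
  "PF a y = (\<chi> i. a $ i * y $ i / (\<Sum>j\<in>UNIV. a $ j * y $ j))"

definition spread_norm :: "real ^ 'n \<Rightarrow> real" where
  "spread_norm v = Max (range (\<lambda>i. v $ i)) - Min (range (\<lambda>i. v $ i))"

text \<open>Euclidean projection onto the simplex (library closest_point; the norm on real^'n is L2).\<close>
definition pi_PoS :: "real ^ 'n \<Rightarrow> real ^ 'n \<Rightarrow> real ^ 'n" where
  "pi_PoS a x = closest_point prob_simplex (PF a x)"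

end

theory Submission
  imports Defs
begin

text \<open>Let \<open>p\<close> have coordinate sum 1 and let \<open>v\<close> be its Euclidean projection onto the simplex,
  \<open>z = v - p\<close>. The variational inequality of the projection, tested with the moves that shift
  mass from a coordinate \<open>j\<close> with \<open>v\<^sub>j > 0\<close> to another coordinate, shows that \<open>z\<close> attains its
  minimum on the support of \<open>v\<close>. Now let \<open>w\<close> be in the simplex with spread of \<open>w - p\<close> at most
  that of \<open>z\<close>. At a maximiser \<open>h\<close> of \<open>z\<close> either \<open>v\<^sub>h = 0\<close>, so \<open>(w - p)\<^sub>h \<ge> z\<^sub>h\<close>, or \<open>z\<close> is
  constant, hence zero; in both cases the spread bound forces \<open>w\<^sub>j \<ge> v\<^sub>j\<close> on the support of \<open>v\<close>.
  So \<open>w \<ge> v\<close>, and equal coordinate sums give \<open>w = v\<close>. This proves uniqueness, and optimality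
  follows from it.\<close>

lemma spread_norm_ge_diff: "(z::real^'n) $ i - z $ j \<le> spread_norm z"
proof -
  have "z $ i \<le> Max (range (\<lambda>i. z $ i))" by (rule Max_ge) auto
  moreover have "Min (range (\<lambda>i. z $ i)) \<le> z $ j" by (rule Min_le) auto
  ultimately show ?thesis unfolding spread_norm_def by linarith
qed

lemma spread_norm_attained:
  obtains hi lo where "spread_norm (z::real^'n) = z $ hi - z $ lo"
    and "\<And>k. z $ lo \<le> z $ k" and "\<And>k. z $ k \<le> z $ hi"
proof -
  have "Max (range (\<lambda>i. z $ i)) \<in> range (\<lambda>i. z $ i)" by (rule Max_in) auto
  then obtain hi where hi: "Max (range (\<lambda>i. z $ i)) = z $ hi" by (metis rangeE)
  have "Min (range (\<lambda>i. z $ i)) \<in> range (\<lambda>i. z $ i)" by (rule Min_in) auto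
  then obtain lo where lo: "Min (range (\<lambda>i. z $ i)) = z $ lo" by (metis rangeE)
  show ?thesis
  proof
    show "spread_norm z = z $ hi - z $ lo" using hi lo unfolding spread_norm_def by simp
    show "z $ lo \<le> z $ k" for k
      unfolding lo[symmetric] by (rule Min_le) auto
    show "z $ k \<le> z $ hi" for k
      unfolding hi[symmetric] by (rule Max_ge) auto
  qed
qed

lemma sum_eq_0_imp_nonneg_term:
  fixes f :: "'n::finite \<Rightarrow> real"
  assumes "(\<Sum>i\<in>UNIV. f i) = 0"
  obtains k where "0 \<le> f k"
proof (rule ccontr)
  assume "\<not> thesis"
  with that have "\<forall>k. 0 < - f k" by (meson neg_0_less_iff_less not_le)
  then have "0 < (\<Sum>i\<in>UNIV. - f i)" by (intro sum_pos) auto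
  then show False using assms by (simp add: sum_negf)
qed

lemma closed_prob_simplex: "closed (prob_simplex :: (real^'n) set)"
proof -
  have "prob_simplex = {v::real^'n. \<forall>i. 0 \<le> v $ i} \<inter> {v. inner (\<chi> i. 1) v = 1}"
    unfolding prob_simplex_def by (auto simp: inner_vec_def)
  then show ?thesis by (metis closed_Int closed_positive_orthant closed_hyperplane)
qed

lemma convex_prob_simplex: "convex (prob_simplex :: (real^'n) set)"
  unfolding convex_def prob_simplex_def
  by (auto simp: sum.distrib sum_distrib_left[symmetric])

lemma prob_simplex_nonempty: "(prob_simplex :: (real^'n) set) \<noteq> {}"
proof -
  have "(\<chi> i. 1 / real CARD('n)) \<in> (prob_simplex :: (real^'n) set)"
    unfolding prob_simplex_def by auto
  then show ?thesis by auto
qed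

lemma closest_point_prob_simplex_in: "closest_point prob_simplex p \<in> prob_simplex"
  by (rule closest_point_in_set[OF closed_prob_simplex prob_simplex_nonempty])

lemma prob_simplex_eq_if_le:
  assumes "v \<in> prob_simplex" "w \<in> prob_simplex" "\<And>j. v $ j \<le> w $ j"
  shows "w = v"
proof -
  have "(\<Sum>i\<in>UNIV. w $ i - v $ i) = 0"
    using assms(1,2) unfolding prob_simplex_def by (simp add: sum_subtractf)
  then have "\<forall>i\<in>UNIV. w $ i - v $ i = 0"
    using assms(3) by (subst sum_nonneg_eq_0_iff[symmetric]) (auto simp: algebra_simps)
  then show ?thesis by (simp add: vec_eq_iff)
qed

lemma inner_unit_coordinate: "inner (u::real^'n) (\<chi> k. if k = i then c else 0) = u $ i * c"
  by (simp add: inner_vec_def if_distrib cong: if_cong)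

lemma closest_point_prob_simplex_min_on_support:
  fixes p :: "real^'n"
  defines "v \<equiv> closest_point prob_simplex p"
  assumes "0 < v $ j"
  shows "(v - p) $ j \<le> (v - p) $ i"
proof (cases "i = j")
  case False
  have vS: "v \<in> prob_simplex" unfolding v_def by (rule closest_point_prob_simplex_in)
  define w where "w = v + (\<chi> k. if k = i then v $ j else 0) - (\<chi> k. if k = j then v $ j else 0)"
  have "w \<in> prob_simplex"
  proof -
    have "(\<Sum>k\<in>UNIV. w $ k) = (\<Sum>k\<in>UNIV. v $ k)"
      unfolding w_def by (simp add: sum.distrib sum_subtractf)
    moreover have "0 \<le> w $ k" for k
      using vS False unfolding w_def prob_simplex_def by auto
    ultimately show ?thesis using vS unfolding prob_simplex_def by auto
  qed
  then have "inner (p - v) (w - v) \<le> 0"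
    unfolding v_def by (rule closest_point_dot[OF convex_prob_simplex closed_prob_simplex])
  moreover have "inner (p - v) (w - v) = ((v - p) $ j - (v - p) $ i) * v $ j"
    unfolding w_def by (simp add: inner_diff_right inner_unit_coordinate algebra_simps)
  ultimately show ?thesis using assms(2) by (simp add: mult_le_0_iff)
qed simp

lemma closest_point_prob_simplex_unique_spread_min:
  fixes p w :: "real^'n"
  defines "v \<equiv> closest_point prob_simplex p"
  assumes sum_p: "(\<Sum>i\<in>UNIV. p $ i) = 1"
    and wS: "w \<in> prob_simplex"
    and spread_le: "spread_norm (w - p) \<le> spread_norm (v - p)"
  shows "w = v"
proof (rule prob_simplex_eq_if_le)
  show vS: "v \<in> prob_simplex" unfolding v_def by (rule closest_point_prob_simplex_in)
  show "w \<in> prob_simplex" by (fact wS)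
  define z where "z = v - p"
  define d where "d = w - p"
  obtain hi lo where spread_z: "spread_norm z = z $ hi - z $ lo"
    and lo: "\<And>k. z $ lo \<le> z $ k" and hi: "\<And>k. z $ k \<le> z $ hi"
    using spread_norm_attained[of z] by blast
  have d_lower: "d $ k - spread_norm z \<le> d $ j" for k j
    using spread_norm_ge_diff[of d k j] spread_le unfolding d_def z_def by linarith
  fix j
  show "v $ j \<le> w $ j"
  proof (cases "v $ j = 0")
    case True
    then show ?thesis using wS unfolding prob_simplex_def by auto
  next
    case False
    then have "0 < v $ j" using vS unfolding prob_simplex_def by (auto simp: less_le)
    then have "z $ j \<le> z $ lo"
      using closest_point_prob_simplex_min_on_support[of p j lo] unfolding z_def v_def by blast
    then have z_j: "z $ j = z $ lo" using lo[of j] by linarith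
    have "z $ lo \<le> d $ j"
    proof (cases "v $ hi = 0")
      case True
      then have "z $ hi \<le> d $ hi" using wS unfolding z_def d_def prob_simplex_def by auto
      then show ?thesis using d_lower[of hi j] spread_z by linarith
    next
      case False
      then have "0 < v $ hi" using vS unfolding prob_simplex_def by (auto simp: less_le)
      then have "z $ hi \<le> z $ lo"
        using closest_point_prob_simplex_min_on_support[of p hi lo] unfolding z_def v_def by blast
      text \<open>Then \<open>z\<close> and \<open>d\<close> are constant, and both have coordinate sum 0.\<close>
      have "(\<Sum>i\<in>UNIV. - z $ i) = 0" "(\<Sum>i\<in>UNIV. d $ i) = 0"
        using vS wS sum_p unfolding z_def d_def prob_simplex_def
        by (simp_all add: sum_subtractf sum_negf)
      then obtain k0 k1 where "0 \<le> - z $ k0" "0 \<le> d $ k1"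
        by (elim sum_eq_0_imp_nonneg_term)
      then show ?thesis using d_lower[of k1 j] lo[of k0] hi[of k0] \<open>z $ hi \<le> z $ lo\<close> spread_z
        by linarith
    qed
    then show ?thesis using z_j unfolding z_def d_def by simp
  qed
qed

lemma sum_PF_eq_1:
  assumes "(\<Sum>j\<in>UNIV. a $ j * y $ j) \<noteq> 0"
  shows "(\<Sum>i\<in>UNIV. PF a y $ i) = 1"
  using assms unfolding PF_def by (simp add: sum_divide_distrib[symmetric])

theorem theorem2:
  fixes a x :: "real ^ 'n"
  assumes "\<forall>i. 0 < a $ i"
    and "(\<Sum>j\<in>UNIV. a $ j * x $ j) \<noteq> 0"
  shows "pi_PoS a x \<in> prob_simplex
    \<and> (\<forall>w\<in>prob_simplex. spread_norm (pi_PoS a x - PF a x) \<le> spread_norm (w - PF a x))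
    \<and> (\<forall>w\<in>prob_simplex. spread_norm (w - PF a x) \<le> spread_norm (pi_PoS a x - PF a x) \<longrightarrow> w = pi_PoS a x)"
proof -
  have unique: "w = pi_PoS a x"
    if "w \<in> prob_simplex" "spread_norm (w - PF a x) \<le> spread_norm (pi_PoS a x - PF a x)" for w
    using that unfolding pi_PoS_def
    by (rule closest_point_prob_simplex_unique_spread_min[OF sum_PF_eq_1[OF assms(2)]])
  have "spread_norm (pi_PoS a x - PF a x) \<le> spread_norm (w - PF a x)" if "w \<in> prob_simplex" for w
    using unique[OF that] by force
  then show ?thesis
    using unique closest_point_prob_simplex_in unfolding pi_PoS_def by blast
qed

end
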